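(* Let $M$ be an $n\times n$ non-singular, aperiodic, odd-block matrix with nonnegative integer entries, and let $h$ be any piecewise-linear map realizing $M$. Then there exists an aperiodic odd-block matrix $N$ with entries only in $\{0,1\}$ such that $h$ is a piecewise-linear map realizing $N$ (i.e. $h_N=h_M=h$), and the leading eigenvalue of $N$ equals the leading eigenvalue of $M$.
   Context: An $m\times m$ nonnegative integer matrix $A$ is odd-block if (i) in each column of $A$ the non-zero entries form one consecutive block, and (ii) there is a map $\phi:\{0,1,\dots,m\}\to\{0,1,\dots,m\}$ such that $A_{ij}$ is odd if and only if $\min\{\phi(j-1),\phi(j)\}<i\le\max\{\phi(j-1),\phi(j)\}$. A nonnegative matrix is aperiodic if some power of it has all entries positive. For an aperiodic nonnegative integer $m\times m$ matrix $A$ with leading (Perron) eigenvalue $\lambda$, let $v$ be the positive eigenvector of $A^T$ for $\lambda$ normalized to have $L^1$-norm $1$, set $x_0=0$ and $x_i=x_{i-1}+v_i$ (so $x_m=1$), and $I_i=[x_{i-1},x_i]$. A piecewise-linear map realizing $A$ (denoted $h_A$) is a continuous map $h:[0,1]\to[0,1]$ such that for each $j$ there is a subdivision $x_{j-1}=a_0<a_1<\dots<a_r=x_j$ with $h$ affine of slope $\pm\lambda$ on each $[a_{k-1},a_k]$ and mapping it onto some interval $I_i$, and for every $i$ the number of $k$ with $h([a_{k-1},a_k])=I_i$ equals $A_{ij}$. Such a map need not be unique when $A$ has entries larger than $1$. *)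

theory Defs
  imports Complex_Main "Jordan_Normal_Form.Spectral_Radius" "Jordan_Normal_Form.Determinant"
begin

text \<open>Square matrices of varying size m are represented as functions
  nat => nat => nat (nonnegative integer entries), with rows/columns indexed by 1..m;
  entries outside this range are irrelevant.\<close>

definition to_mat :: "nat \<Rightarrow> (nat \<Rightarrow> nat \<Rightarrow> 'a::semiring_1) \<Rightarrow> 'a mat" where
  "to_mat m A = mat m m (\<lambda>(i,j). A (Suc i) (Suc j))"

definition nat_to_real :: "(nat \<Rightarrow> nat \<Rightarrow> nat) \<Rightarrow> nat \<Rightarrow> nat \<Rightarrow> real" where
  "nat_to_real A = (\<lambda>i j. real (A i j))"

definition nonsingular :: "nat \<Rightarrow> (nat \<Rightarrow> nat \<Rightarrow> nat) \<Rightarrow> bool" where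
  "nonsingular m A \<longleftrightarrow> det (to_mat m (nat_to_real A)) \<noteq> 0"

definition aperiodic :: "nat \<Rightarrow> (nat \<Rightarrow> nat \<Rightarrow> nat) \<Rightarrow> bool" where
  "aperiodic m A \<longleftrightarrow> (\<exists>k\<ge>1. \<forall>i<m. \<forall>j<m. (to_mat m A ^\<^sub>m k) $$ (i,j) > 0)"

definition odd_block :: "nat \<Rightarrow> (nat \<Rightarrow> nat \<Rightarrow> nat) \<Rightarrow> bool" where
  "odd_block m A \<longleftrightarrow>
     (\<forall>j\<in>{1..m}. \<forall>i1\<in>{1..m}. \<forall>i2\<in>{1..m}. \<forall>i3\<in>{1..m}.
        i1 \<le> i2 \<and> i2 \<le> i3 \<and> A i1 j \<noteq> 0 \<and> A i3 j \<noteq> 0 \<longrightarrow> A i2 j \<noteq> 0) \<and>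
     (\<exists>\<phi> :: nat \<Rightarrow> nat. (\<forall>k\<in>{0..m}. \<phi> k \<in> {0..m}) \<and>
        (\<forall>i\<in>{1..m}. \<forall>j\<in>{1..m}.
           odd (A i j) \<longleftrightarrow> min (\<phi> (j-1)) (\<phi> j) < i \<and> i \<le> max (\<phi> (j-1)) (\<phi> j)))"

definition leading_eigenvalue :: "nat \<Rightarrow> (nat \<Rightarrow> nat \<Rightarrow> nat) \<Rightarrow> real" where
  "leading_eigenvalue m A = spectral_radius (to_mat m (\<lambda>i j. complex_of_nat (A i j)))"

definition perron_left_vector :: "nat \<Rightarrow> (nat \<Rightarrow> nat \<Rightarrow> nat) \<Rightarrow> real \<Rightarrow> (nat \<Rightarrow> real) \<Rightarrow> bool" where
  "perron_left_vector m A lam v \<longleftrightarrow>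
     (\<forall>i\<in>{1..m}. v i > 0) \<and> (\<Sum>i=1..m. v i) = 1 \<and>
     (\<forall>j\<in>{1..m}. (\<Sum>i=1..m. real (A i j) * v i) = lam * v j)"

definition partition_pt :: "(nat \<Rightarrow> real) \<Rightarrow> nat \<Rightarrow> real" where
  "partition_pt v i = (\<Sum>k=1..i. v k)"

definition pl_realizes :: "(real \<Rightarrow> real) \<Rightarrow> nat \<Rightarrow> (nat \<Rightarrow> nat \<Rightarrow> nat) \<Rightarrow> bool" where
  "pl_realizes h m A \<longleftrightarrow>
     (let lam = leading_eigenvalue m A in
      \<exists>v. perron_left_vector m A lam v \<and>
        (let x = partition_pt v in
          continuous_on {0..1} h \<and> h ` {0..1} \<subseteq> {0..1} \<and>
          (\<forall>j\<in>{1..m}. \<exists>(r::nat) (a::nat \<Rightarrow> real).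
             a 0 = x (j-1) \<and> a r = x j \<and> (\<forall>k<r. a k < a (Suc k)) \<and>
             (\<forall>k\<in>{1..r}.
                (\<exists>s c. (s = lam \<or> s = - lam) \<and> (\<forall>t\<in>{a (k-1)..a k}. h t = s * t + c)) \<and>
                (\<exists>i\<in>{1..m}. h ` {a (k-1)..a k} = {x (i-1)..x i})) \<and>
             (\<forall>i\<in>{1..m}. card {k\<in>{1..r}. h ` {a (k-1)..a k} = {x (i-1)..x i}} = A i j))))"

end

theory Submission
  imports Defs
begin

text \<open>Number the affine pieces of \<open>h\<close> that witness the realization of \<open>M\<close> from left to right;
  call them laps \<open>J\<^sub>1, \<dots>, J\<^sub>m\<close>. Each lap is mapped affinely with slope \<open>\<plusminus>\<lambda>\<close> onto some
  \<open>I\<^sub>i\<close>, and \<open>I\<^sub>i\<close> is the union of a run of consecutive laps. So \<open>h\<close> realizes the 0-1 matrix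
  \<open>N\<close> with \<open>N\<^sub>q\<^sub>p = 1\<close> iff \<open>J\<^sub>q \<subseteq> h(J\<^sub>p)\<close>: each column is one run of ones whose ends are
  read off from the values of \<open>h\<close> at the endpoints of \<open>J\<^sub>p\<close>, which gives the odd-block property.
  The lap lengths form a positive left eigenvector of \<open>N\<close> for \<open>\<lambda>\<close>, so \<open>\<lambda>\<close> is the spectral
  radius of \<open>N\<close>. Finally \<open>(N\<^bsup>t+1\<^esup>)\<^sub>q\<^sub>p = (M\<^bsup>t\<^esup>)\<^sub>i\<^sub>j\<close> when \<open>J\<^sub>q \<subseteq> I\<^sub>i\<close> and
  \<open>h(J\<^sub>p) = I\<^sub>j\<close>, so \<open>N\<close> is aperiodic because \<open>M\<close> is.\<close>

section \<open>Spectral radius and powers of nonnegative matrices\<close>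

lemma eigenvalue_transpose_mat:
  fixes A :: "'a::field mat"
  assumes "A \<in> carrier_mat n n"
  shows "eigenvalue (transpose_mat A) \<mu> \<longleftrightarrow> eigenvalue A \<mu>"
proof -
  have AT: "transpose_mat A \<in> carrier_mat n n" using assms by simp
  show ?thesis
    unfolding eigenvalue_root_char_poly[OF assms] eigenvalue_root_char_poly[OF AT]
      char_poly_transpose_mat[OF assms] ..
qed

lemma eigenvector_row_bound:
  fixes A :: "nat \<Rightarrow> nat \<Rightarrow> real"
  assumes A_nonneg: "\<And>i j. i \<in> {1..m} \<Longrightarrow> j \<in> {1..m} \<Longrightarrow> A i j \<ge> 0"
    and u: "eigenvector (to_mat m (\<lambda>i j. complex_of_real (A i j))) u \<mu>" and i: "i < m"
  shows "cmod \<mu> * cmod (u $ i) \<le> (\<Sum>l<m. A (Suc i) (Suc l) * cmod (u $ l))"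
proof -
  let ?C = "to_mat m (\<lambda>i j. complex_of_real (A i j))"
  have C: "?C \<in> carrier_mat m m" by (simp add: to_mat_def)
  have "u \<in> carrier_vec m" and Cu: "?C *\<^sub>v u = \<mu> \<cdot>\<^sub>v u"
    using u C unfolding eigenvector_def by auto
  then have "\<mu> * u $ i = (?C *\<^sub>v u) $ i" using i by simp
  also have "\<dots> = (\<Sum>l<m. complex_of_real (A (Suc i) (Suc l)) * u $ l)"
    using \<open>u \<in> carrier_vec m\<close> C i
    by (auto simp: scalar_prod_def to_mat_def lessThan_atLeast0 intro!: sum.cong)
  finally have "cmod \<mu> * cmod (u $ i) = cmod (\<Sum>l<m. complex_of_real (A (Suc i) (Suc l)) * u $ l)"
    by (metis norm_mult)
  also have "\<dots> \<le> (\<Sum>l<m. cmod (complex_of_real (A (Suc i) (Suc l)) * u $ l))"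
    by (rule norm_sum)
  also have "\<dots> = (\<Sum>l<m. A (Suc i) (Suc l) * cmod (u $ l))"
    using i A_nonneg by (intro sum.cong) (auto simp: norm_mult)
  finally show ?thesis .
qed

text \<open>Weighting the row bounds with the positive left eigenvector \<open>w\<close> and summing gives
  \<open>\<bar>\<mu>\<bar> S \<le> lam S\<close> for \<open>S = \<Sum>\<^sub>l w\<^sub>l \<bar>u\<^sub>l\<bar> > 0\<close>.\<close>
lemma norm_spectrum_le_left_eigenvalue:
  fixes A :: "nat \<Rightarrow> nat \<Rightarrow> real"
  assumes A_nonneg: "\<And>i j. i \<in> {1..m} \<Longrightarrow> j \<in> {1..m} \<Longrightarrow> A i j \<ge> 0"
    and w_pos: "\<And>i. i \<in> {1..m} \<Longrightarrow> w i > 0"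
    and left_eigen: "\<And>j. j \<in> {1..m} \<Longrightarrow> (\<Sum>i=1..m. A i j * w i) = lam * w j"
    and \<mu>: "\<mu> \<in> spectrum (to_mat m (\<lambda>i j. complex_of_real (A i j)))"
  shows "cmod \<mu> \<le> lam"
proof -
  have w_pos': "w (Suc i) > 0" and w_nonneg': "w (Suc i) \<ge> 0" if "i < m" for i
    using w_pos[of "Suc i"] that by auto
  have left_eigen': "(\<Sum>i<m. A (Suc i) (Suc l) * w (Suc i)) = lam * w (Suc l)" if "l < m" for l
    using left_eigen[of "Suc l"] that by (simp add: sum.atLeast1_atMost_eq)
  obtain u where u: "eigenvector (to_mat m (\<lambda>i j. complex_of_real (A i j))) u \<mu>"
    using \<mu> unfolding spectrum_def eigenvalue_def by auto
  define S where "S = (\<Sum>l<m. w (Suc l) * cmod (u $ l))"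
  have "cmod \<mu> * S = (\<Sum>i<m. w (Suc i) * (cmod \<mu> * cmod (u $ i)))"
    by (simp add: S_def sum_distrib_left mult_ac)
  also have "\<dots> \<le> (\<Sum>i<m. w (Suc i) * (\<Sum>l<m. A (Suc i) (Suc l) * cmod (u $ l)))"
    using eigenvector_row_bound[OF A_nonneg u] w_nonneg' by (intro sum_mono mult_left_mono) auto
  also have "\<dots> = (\<Sum>i<m. \<Sum>l<m. cmod (u $ l) * (A (Suc i) (Suc l) * w (Suc i)))"
    by (simp add: sum_distrib_left mult_ac)
  also have "\<dots> = (\<Sum>l<m. cmod (u $ l) * (\<Sum>i<m. A (Suc i) (Suc l) * w (Suc i)))"
    by (subst sum.swap) (simp add: sum_distrib_left)
  also have "\<dots> = (\<Sum>l<m. cmod (u $ l) * (lam * w (Suc l)))"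
    by (simp add: left_eigen')
  also have "\<dots> = lam * S"
    by (simp add: S_def sum_distrib_left mult_ac)
  finally have "cmod \<mu> * S \<le> lam * S" .
  moreover obtain i0 where "i0 < m" "u $ i0 \<noteq> 0"
    using u unfolding eigenvector_def to_mat_def
    by (metis carrier_vecD dim_row_mat(1) eq_vecI index_zero_vec(1) index_zero_vec(2))
  then have "S > 0"
    unfolding S_def using w_pos' w_nonneg' by (intro sum_pos2[of _ i0]) auto
  ultimately show ?thesis by simp
qed

lemma eigenvalue_of_left_eigenvector:
  fixes A :: "nat \<Rightarrow> nat \<Rightarrow> real"
  assumes m: "m \<ge> 1"
    and w_pos: "\<And>i. i \<in> {1..m} \<Longrightarrow> w i > 0"
    and left_eigen: "\<And>j. j \<in> {1..m} \<Longrightarrow> (\<Sum>i=1..m. A i j * w i) = lam * w j"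
  shows "eigenvalue (to_mat m (\<lambda>i j. complex_of_real (A i j))) (complex_of_real lam)"
proof -
  let ?C = "to_mat m (\<lambda>i j. complex_of_real (A i j))"
  have C: "?C \<in> carrier_mat m m" by (simp add: to_mat_def)
  define u where "u = vec m (\<lambda>i. complex_of_real (w (Suc i)))"
  have u: "u \<in> carrier_vec m" "u \<noteq> 0\<^sub>v m"
    using m w_pos[of 1] by (auto simp: u_def vec_eq_iff intro!: exI[of _ 0])
  have "transpose_mat ?C *\<^sub>v u = complex_of_real lam \<cdot>\<^sub>v u"
  proof (rule eq_vecI)
    fix i assume "i < dim_vec (complex_of_real lam \<cdot>\<^sub>v u)"
    then have i: "i < m" by (simp add: u_def)
    have "(transpose_mat ?C *\<^sub>v u) $ i = (\<Sum>l<m. complex_of_real (A (Suc l) (Suc i) * w (Suc l)))"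
      using u C i by (auto simp: scalar_prod_def to_mat_def u_def lessThan_atLeast0 intro!: sum.cong)
    also have "\<dots> = complex_of_real (\<Sum>l=1..m. A l (Suc i) * w l)"
      by (simp add: sum.atLeast1_atMost_eq)
    also have "\<dots> = (complex_of_real lam \<cdot>\<^sub>v u) $ i"
      using left_eigen[of "Suc i"] i by (simp add: u_def)
    finally show "(transpose_mat ?C *\<^sub>v u) $ i = (complex_of_real lam \<cdot>\<^sub>v u) $ i" .
  qed (use C in \<open>simp add: u_def\<close>)
  then show ?thesis
    using u C eigenvalue_transpose_mat[OF C] unfolding eigenvalue_def eigenvector_def by auto
qed

lemma spectral_radius_eq_left_eigenvalue:
  fixes A :: "nat \<Rightarrow> nat \<Rightarrow> real"
  assumes m: "m \<ge> 1"
    and A_nonneg: "\<And>i j. i \<in> {1..m} \<Longrightarrow> j \<in> {1..m} \<Longrightarrow> A i j \<ge> 0"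
    and w_pos: "\<And>i. i \<in> {1..m} \<Longrightarrow> w i > 0"
    and left_eigen: "\<And>j. j \<in> {1..m} \<Longrightarrow> (\<Sum>i=1..m. A i j * w i) = lam * w j"
  shows "spectral_radius (to_mat m (\<lambda>i j. complex_of_real (A i j))) = lam"
proof -
  let ?C = "to_mat m (\<lambda>i j. complex_of_real (A i j))"
  have C: "?C \<in> carrier_mat m m" and m0: "m > 0" using m by (simp_all add: to_mat_def)
  have "lam \<ge> 0"
  proof -
    have "0 \<le> (\<Sum>i=1..m. A i 1 * w i)"
      using m A_nonneg w_pos by (intro sum_nonneg mult_nonneg_nonneg) (auto intro: less_imp_le)
    then show ?thesis
      using left_eigen[of 1] w_pos[of 1] m by (simp add: zero_le_mult_iff)
  qed
  then have "lam \<in> cmod ` spectrum ?C"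
    using eigenvalue_of_left_eigenvector[OF m w_pos left_eigen] unfolding spectrum_def
    by (intro image_eqI[of _ _ "complex_of_real lam"]) auto
  then have "lam \<le> spectral_radius ?C"
    using spectral_radius_mem_max(2)[OF C m0] by blast
  moreover obtain \<mu> where "\<mu> \<in> spectrum ?C" "spectral_radius ?C = cmod \<mu>"
    using spectral_radius_mem_max(1)[OF C m0] by blast
  then have "spectral_radius ?C \<le> lam"
    using norm_spectrum_le_left_eigenvalue[OF A_nonneg w_pos left_eigen] by simp
  ultimately show ?thesis by simp
qed

lemma sum_diff_telescope:
  fixes f :: "nat \<Rightarrow> 'a::ab_group_add"
  assumes "a \<le> b"
  shows "(\<Sum>q\<in>{Suc a..b}. f q - f (q - 1)) = f b - f a"
  using assms
proof (induction b)
  case (Suc b)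
  show ?case
  proof (cases "a = Suc b")
    case False
    then have "a \<le> b" using Suc.prems by simp
    then show ?thesis using Suc.IH by (simp add: atLeastAtMostSuc_conv)
  qed simp
qed simp

lemma sum_comp_eq_sum_card_fibres:
  fixes f :: "'b \<Rightarrow> 'a::comm_semiring_1"
  assumes "finite K" "finite U" "g ` K \<subseteq> U"
  shows "(\<Sum>k\<in>K. f (g k)) = (\<Sum>u\<in>U. f u * of_nat (card {k\<in>K. g k = u}))"
proof -
  have "(\<Sum>k\<in>K. f (g k)) = (\<Sum>u\<in>U. \<Sum>k\<in>{k\<in>K. g k = u}. f (g k))"
    using sum.group[OF assms, of "\<lambda>k. f (g k)"] by simp
  also have "\<dots> = (\<Sum>u\<in>U. f u * of_nat (card {k\<in>K. g k = u}))"
    by (simp add: mult.commute)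
  finally show ?thesis .
qed

fun pow_entry :: "nat \<Rightarrow> (nat \<Rightarrow> nat \<Rightarrow> nat) \<Rightarrow> nat \<Rightarrow> nat \<Rightarrow> nat \<Rightarrow> nat" where
  "pow_entry m A 0 i j = (if i = j then 1 else 0)"
| "pow_entry m A (Suc t) i j = (\<Sum>l=1..m. pow_entry m A t i l * A l j)"

lemma to_mat_power_index:
  "i < m \<Longrightarrow> j < m \<Longrightarrow> (to_mat m A ^\<^sub>m t) $$ (i,j) = pow_entry m A t (Suc i) (Suc j)"
proof (induction t arbitrary: j)
  case (Suc t)
  have A: "to_mat m A \<in> carrier_mat m m" by (simp add: to_mat_def)
  then have "(to_mat m A ^\<^sub>m Suc t) $$ (i,j) = (\<Sum>l<m. (to_mat m A ^\<^sub>m t) $$ (i,l) * to_mat m A $$ (l,j))"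
    using Suc.prems by (auto simp: scalar_prod_def lessThan_atLeast0 intro!: sum.cong)
  also have "\<dots> = pow_entry m A (Suc t) (Suc i) (Suc j)"
    using Suc by (simp add: to_mat_def sum.atLeast1_atMost_eq)
  finally show ?case .
qed (simp add: to_mat_def)

lemma aperiodic_iff_pow_entry:
  "aperiodic m A \<longleftrightarrow> (\<exists>t\<ge>1. \<forall>i\<in>{1..m}. \<forall>j\<in>{1..m}. pow_entry m A t i j > 0)"
proof -
  have "(\<forall>i<m. \<forall>j<m. (to_mat m A ^\<^sub>m t) $$ (i,j) > 0)
    \<longleftrightarrow> (\<forall>i\<in>{1..m}. \<forall>j\<in>{1..m}. pow_entry m A t i j > 0)" for t
    unfolding image_Suc_lessThan[symmetric] by (auto simp: to_mat_power_index)
  then show ?thesis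
    unfolding aperiodic_def by simp
qed

section \<open>Laps of a piecewise-linear realization\<close>

text \<open>Column \<open>j\<close> of \<open>M\<close> is realized on \<open>I\<^sub>j\<close> by the \<open>R j\<close> laps \<open>[a j (k - 1), a j k]\<close>;
  \<open>S\<close>, \<open>C\<close> and \<open>T\<close> below recover slope, intercept and target interval of a lap.\<close>
locale pl_realization =
  fixes n :: nat and M :: "nat \<Rightarrow> nat \<Rightarrow> nat" and h :: "real \<Rightarrow> real" and lam :: real
    and v :: "nat \<Rightarrow> real" and R :: "nat \<Rightarrow> nat" and a :: "nat \<Rightarrow> nat \<Rightarrow> real"
  assumes perron: "perron_left_vector n M lam v"
    and a_first: "\<And>j. j \<in> {1..n} \<Longrightarrow> a j 0 = partition_pt v (j - 1)"
    and a_last: "\<And>j. j \<in> {1..n} \<Longrightarrow> a j (R j) = partition_pt v j"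
    and a_less: "\<And>j k. j \<in> {1..n} \<Longrightarrow> k < R j \<Longrightarrow> a j k < a j (Suc k)"
    and piece_affine: "\<And>j k. j \<in> {1..n} \<Longrightarrow> k \<in> {1..R j} \<Longrightarrow>
      \<exists>s c. (s = lam \<or> s = - lam) \<and> (\<forall>t\<in>{a j (k - 1)..a j k}. h t = s * t + c)"
    and piece_image: "\<And>j k. j \<in> {1..n} \<Longrightarrow> k \<in> {1..R j} \<Longrightarrow>
      \<exists>i\<in>{1..n}. h ` {a j (k - 1)..a j k} = {partition_pt v (i - 1)..partition_pt v i}"
    and card_laps: "\<And>i j. i \<in> {1..n} \<Longrightarrow> j \<in> {1..n} \<Longrightarrow>
      card {k\<in>{1..R j}. h ` {a j (k - 1)..a j k} = {partition_pt v (i - 1)..partition_pt v i}} = M i j"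
begin

abbreviation x :: "nat \<Rightarrow> real" where "x \<equiv> partition_pt v"

lemma v_pos: "i \<in> {1..n} \<Longrightarrow> v i > 0"
  using perron unfolding perron_left_vector_def by auto

lemma n_pos: "n \<ge> 1"
  using perron unfolding perron_left_vector_def by (cases n) auto

lemma x_0: "x 0 = 0"
  unfolding partition_pt_def by simp

lemma x_n: "x n = 1"
  using perron unfolding perron_left_vector_def partition_pt_def by simp

lemma x_diff: "i \<ge> 1 \<Longrightarrow> x i - x (i - 1) = v i"
  unfolding partition_pt_def by (cases i) auto

lemma x_less: "i < j \<Longrightarrow> j \<le> n \<Longrightarrow> x i < x j"
proof (induction j)
  case (Suc j)
  have "x j < x (Suc j)" using x_diff[of "Suc j"] v_pos[of "Suc j"] Suc.prems by simp
  then show ?case using Suc by (auto simp: less_Suc_eq)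
qed simp

lemma x_inj: "i \<le> n \<Longrightarrow> j \<le> n \<Longrightarrow> x i = x j \<Longrightarrow> i = j"
  using x_less by (metis less_irrefl linorder_neqE_nat)

lemma interval_inj:
  assumes "i \<in> {1..n}" "j \<in> {1..n}" "{x (i - 1)..x i} = {x (j - 1)..x j}"
  shows "i = j"
proof -
  have "x (i - 1) \<le> x i" using x_less[of "i - 1" i] assms(1) by force
  then have "x i = x j" using assms(3) by (simp add: Icc_eq_Icc)
  then show ?thesis using x_inj assms(1,2) by auto
qed

definition S :: "nat \<Rightarrow> nat \<Rightarrow> real" where
  "S j k = (h (a j k) - h (a j (k - 1))) / (a j k - a j (k - 1))"

definition C :: "nat \<Rightarrow> nat \<Rightarrow> real" where "C j k = h (a j k) - S j k * a j k"

definition T :: "nat \<Rightarrow> nat \<Rightarrow> nat" where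
  "T j k = (SOME i. i \<in> {1..n} \<and> h ` {a j (k - 1)..a j k} = {x (i - 1)..x i})"

lemma slope_affine:
  assumes j: "j \<in> {1..n}" and k: "k \<in> {1..R j}"
  shows "S j k = lam \<or> S j k = - lam" "\<And>t. t \<in> {a j (k - 1)..a j k} \<Longrightarrow> h t = S j k * t + C j k"
proof -
  obtain s c where s: "s = lam \<or> s = - lam" and hs: "\<And>t. t \<in> {a j (k - 1)..a j k} \<Longrightarrow> h t = s * t + c"
    using piece_affine[OF j k] by blast
  have lt: "a j (k - 1) < a j k" using a_less[OF j, of "k - 1"] k by auto
  have ends: "h (a j k) = s * a j k + c" "h (a j (k - 1)) = s * a j (k - 1) + c"
    using hs lt by auto
  have "S j k = s * (a j k - a j (k - 1)) / (a j k - a j (k - 1))"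
    unfolding S_def ends by (simp add: algebra_simps)
  then have S: "S j k = s" using lt by simp
  show "S j k = lam \<or> S j k = - lam" using s S by simp
  show "h t = S j k * t + C j k" if "t \<in> {a j (k - 1)..a j k}" for t
    using hs[OF that] ends(1) S unfolding C_def by simp
qed

lemmas slope = slope_affine(1) and affine = slope_affine(2)

lemma target_spec:
  assumes "j \<in> {1..n}" "k \<in> {1..R j}"
  shows "T j k \<in> {1..n} \<and> h ` {a j (k - 1)..a j k} = {x (T j k - 1)..x (T j k)}"
proof -
  have "\<exists>i. i \<in> {1..n} \<and> h ` {a j (k - 1)..a j k} = {x (i - 1)..x i}"
    using piece_image[OF assms] by blast
  then show ?thesis unfolding T_def by (rule someI_ex)
qed

lemmas target = target_spec[THEN conjunct1] and target_image = target_spec[THEN conjunct2]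

lemma R_pos: "j \<in> {1..n} \<Longrightarrow> R j \<ge> 1"
  using a_first[of j] a_last[of j] x_less[of "j - 1" j] by (cases "R j") auto

lemma left_eigen: "j \<in> {1..n} \<Longrightarrow> (\<Sum>i=1..n. real (M i j) * v i) = lam * v j"
  using perron unfolding perron_left_vector_def by blast

lemma lam_nonneg: "lam \<ge> 0"
proof -
  have "0 \<le> (\<Sum>i=1..n. real (M i 1) * v i)"
    using v_pos by (intro sum_nonneg mult_nonneg_nonneg) (auto intro: less_imp_le)
  then have "0 \<le> lam * v 1" using left_eigen[of 1] n_pos by simp
  moreover have "v 1 > 0" using v_pos n_pos by simp
  ultimately show ?thesis by (simp add: zero_le_mult_iff)
qed

lemma lam_pos: "lam > 0"
proof (rule ccontr)
  assume "\<not> lam > 0"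
  then have lam0: "lam = 0" using lam_nonneg by simp
  have j: "1 \<in> {1..n}" and k: "1 \<in> {1..R 1}" using n_pos R_pos[of 1] by auto
  have ends: "x (T 1 1 - 1) < x (T 1 1)" using x_less[of "T 1 1 - 1" "T 1 1"] target[OF j k] by force
  have "h ` {a 1 0..a 1 1} \<subseteq> {C 1 1}" using affine[OF j k] slope[OF j k] lam0 by auto
  then have "{x (T 1 1 - 1)..x (T 1 1)} \<subseteq> {C 1 1}" using target_image[OF j k] by simp
  moreover have "x (T 1 1 - 1) \<in> {x (T 1 1 - 1)..x (T 1 1)}" "x (T 1 1) \<in> {x (T 1 1 - 1)..x (T 1 1)}"
    using ends by auto
  ultimately have "x (T 1 1 - 1) = C 1 1" "x (T 1 1) = C 1 1" by blast+
  then show False using ends by simp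
qed

lemma piece_ends:
  assumes j: "j \<in> {1..n}" and k: "k \<in> {1..R j}"
  shows "S j k = lam \<Longrightarrow> lam * a j (k - 1) + C j k = x (T j k - 1) \<and> lam * a j k + C j k = x (T j k)"
    and "S j k = - lam \<Longrightarrow> - lam * a j k + C j k = x (T j k - 1) \<and> - lam * a j (k - 1) + C j k = x (T j k)"
proof -
  have lt: "a j (k - 1) < a j k" using a_less[OF j, of "k - 1"] k by auto
  have im: "(\<lambda>t. S j k * t + C j k) ` {a j (k - 1)..a j k} = {x (T j k - 1)..x (T j k)}"
    using target_image[OF j k] affine[OF j k] by (metis (no_types, lifting) image_cong)
  have xle: "x (T j k - 1) \<le> x (T j k)" using x_less[of "T j k - 1" "T j k"] target[OF j k] by force
  show "S j k = lam \<Longrightarrow> lam * a j (k - 1) + C j k = x (T j k - 1) \<and> lam * a j k + C j k = x (T j k)"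
    using im lt xle lam_pos by (simp add: image_affinity_atLeastAtMost Icc_eq_Icc)
  show "- lam * a j k + C j k = x (T j k - 1) \<and> - lam * a j (k - 1) + C j k = x (T j k)"
    if neg: "S j k = - lam"
  proof -
    have "{S j k * a j k + C j k..S j k * a j (k - 1) + C j k} = {x (T j k - 1)..x (T j k)}"
      using image_affinity_atLeastAtMost[of "S j k" "C j k" "a j (k - 1)" "a j k"] im lt neg lam_pos
      by simp
    then show ?thesis using xle neg by (simp add: Icc_eq_Icc)
  qed
qed

lemma piece_length:
  assumes j: "j \<in> {1..n}" and k: "k \<in> {1..R j}"
  shows "lam * (a j k - a j (k - 1)) = v (T j k)"
proof -
  have "lam * (a j k - a j (k - 1)) = x (T j k) - x (T j k - 1)"
    using slope[OF j k] piece_ends[OF j k] by (auto simp: algebra_simps)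
  also have "\<dots> = v (T j k)"
    using x_diff target[OF j k] by simp
  finally show ?thesis .
qed

text \<open>The laps are numbered from left to right: lap \<open>offset (j - 1) + k\<close> is the \<open>k\<close>-th lap
  inside \<open>I\<^sub>j\<close>, it has endpoints \<open>y (p - 1)\<close> and \<open>y p\<close>.\<close>

definition offset :: "nat \<Rightarrow> nat" where "offset j = (\<Sum>q=1..j. R q)"

definition lap_count :: nat where "lap_count = offset n"

definition block :: "nat \<Rightarrow> nat" where "block p = (LEAST j. p \<le> offset j)"

definition lap_index :: "nat \<Rightarrow> nat" where "lap_index p = p - offset (block p - 1)"

definition y :: "nat \<Rightarrow> real" where "y p = (if p = 0 then 0 else a (block p) (lap_index p))"

lemma offset_0 [simp]: "offset 0 = 0"
  unfolding offset_def by simp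

lemma offset_step: "j \<ge> 1 \<Longrightarrow> offset j = offset (j - 1) + R j"
  unfolding offset_def by (cases j) simp_all

lemma offset_mono: "j \<le> j' \<Longrightarrow> offset j \<le> offset j'"
  unfolding offset_def by (rule sum_mono2) auto

lemma offset_le_lap_count: "j \<le> n \<Longrightarrow> offset j \<le> lap_count"
  unfolding lap_count_def by (rule offset_mono)

lemma lap_count_pos: "lap_count \<ge> 1"
  using offset_step[of n] R_pos[of n] n_pos unfolding lap_count_def by simp

lemma block_eqI:
  assumes j: "j \<in> {1..n}" and p: "offset (j - 1) < p" "p \<le> offset j"
  shows "block p = j"
proof -
  have le: "block p \<le> j" unfolding block_def using p by (simp add: Least_le)
  have "p \<le> offset (block p)" unfolding block_def using p by (metis LeastI)
  then have "\<not> block p \<le> j - 1" using p offset_mono[of "block p" "j - 1"] by linarith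
  then show ?thesis using le by simp
qed

lemma block_bounds:
  assumes "p \<in> {1..lap_count}"
  shows "block p \<in> {1..n}" "offset (block p - 1) < p" "p \<le> offset (block p)"
proof -
  have ex: "p \<le> offset n" using assms lap_count_def by simp
  show above: "p \<le> offset (block p)" unfolding block_def using ex by (metis LeastI)
  have "block p \<le> n" unfolding block_def using ex by (simp add: Least_le)
  moreover have "block p \<noteq> 0"
  proof
    assume "block p = 0"
    with above assms show False by simp
  qed
  ultimately show "block p \<in> {1..n}" by simp
  show "offset (block p - 1) < p"
  proof (rule ccontr)
    assume "\<not> offset (block p - 1) < p"
    then have "p \<le> offset (block p - 1)" by simp
    then have "block p \<le> block p - 1" unfolding block_def by (rule Least_le)
    then show False using \<open>block p \<noteq> 0\<close> by simp
  qed
qed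

lemma lap_decomp:
  assumes "p \<in> {1..lap_count}"
  shows "block p \<in> {1..n}" "lap_index p \<in> {1..R (block p)}" "p = offset (block p - 1) + lap_index p"
  using block_bounds[OF assms] offset_step[of "block p"] unfolding lap_index_def by auto

lemma block_offset_add: "j \<in> {1..n} \<Longrightarrow> k \<in> {1..R j} \<Longrightarrow> block (offset (j - 1) + k) = j"
  using block_eqI offset_step[of j] by simp

lemma y_offset_add:
  assumes j: "j \<in> {1..n}" and k: "k \<le> R j"
  shows "y (offset (j - 1) + k) = a j k"
proof (cases "k \<ge> 1")
  case True
  then show ?thesis
    using block_offset_add[OF j] k unfolding y_def lap_index_def by simp
next
  case False
  then have k0: "k = 0" by simp
  show ?thesis
  proof (cases "j = 1")
    case True
    then show ?thesis using k0 a_first[OF j] x_0 by (simp add: y_def)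
  next
    case j1: False
    then have j': "j - 1 \<in> {1..n}" using j by auto
    have "y (offset (j - 1 - 1) + R (j - 1)) = a (j - 1) (R (j - 1))"
      using block_offset_add[OF j', of "R (j - 1)"] R_pos[OF j']
      unfolding y_def lap_index_def by simp
    then show ?thesis
      using k0 offset_step[of "j - 1"] j' a_last[OF j'] a_first[OF j] by simp
  qed
qed

lemma y_offset: "j \<le> n \<Longrightarrow> y (offset j) = x j"
  using y_offset_add[of j "R j"] offset_step[of j] a_last[of j] x_0
  by (cases "j = 0") (auto simp: y_def)

lemma y_0: "y 0 = 0"
  by (simp add: y_def)

lemma y_lap_count: "y lap_count = 1"
  using y_offset[of n] x_n unfolding lap_count_def by simp

lemma lap_endpoints:
  assumes "p \<in> {1..lap_count}"
  shows "y (p - 1) = a (block p) (lap_index p - 1)" "y p = a (block p) (lap_index p)"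
proof -
  note d = lap_decomp[OF assms]
  have "p - 1 = offset (block p - 1) + (lap_index p - 1)" using d by auto
  moreover have "lap_index p - 1 \<le> R (block p)" using d(2) by auto
  ultimately show "y (p - 1) = a (block p) (lap_index p - 1)"
    using y_offset_add[OF d(1)] by metis
  show "y p = a (block p) (lap_index p)"
    using y_offset_add[OF d(1), of "lap_index p"] d by simp
qed

lemma y_less_step:
  assumes "p \<in> {1..lap_count}"
  shows "y (p - 1) < y p"
proof -
  note d = lap_decomp[OF assms]
  have "a (block p) (lap_index p - 1) < a (block p) (Suc (lap_index p - 1))"
    using d by (intro a_less) auto
  moreover have "Suc (lap_index p - 1) = lap_index p" using d(2) by auto
  ultimately show ?thesis using lap_endpoints[OF assms] by simp
qed

lemma y_less: "q < p \<Longrightarrow> p \<le> lap_count \<Longrightarrow> y q < y p"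
proof (induction p)
  case (Suc p)
  have "y p < y (Suc p)" using y_less_step[of "Suc p"] Suc.prems by simp
  then show ?case using Suc by (auto simp: less_Suc_eq)
qed simp

lemma y_inj: "q \<le> lap_count \<Longrightarrow> p \<le> lap_count \<Longrightarrow> y q = y p \<Longrightarrow> q = p"
  using y_less by (metis less_irrefl linorder_neqE_nat)

lemma lap_inj:
  assumes "q \<in> {1..lap_count}" "p \<in> {1..lap_count}" "{y (q - 1)..y q} = {y (p - 1)..y p}"
  shows "q = p"
proof -
  have "y (q - 1) \<le> y q" using y_less_step[OF assms(1)] by simp
  then have "y q = y p" using assms(3) by (simp add: Icc_eq_Icc)
  then show ?thesis using y_inj assms(1,2) by auto
qed

definition lap_target :: "nat \<Rightarrow> nat" where "lap_target p = T (block p) (lap_index p)"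

definition lap_slope :: "nat \<Rightarrow> real" where "lap_slope p = S (block p) (lap_index p)"

definition lap_const :: "nat \<Rightarrow> real" where "lap_const p = C (block p) (lap_index p)"

lemma lap_target_range: "p \<in> {1..lap_count} \<Longrightarrow> lap_target p \<in> {1..n}"
  unfolding lap_target_def using target lap_decomp by blast

lemma lap_slope_cases: "p \<in> {1..lap_count} \<Longrightarrow> lap_slope p = lam \<or> lap_slope p = - lam"
  unfolding lap_slope_def using slope lap_decomp by blast

lemma lap_slope_nonzero: "p \<in> {1..lap_count} \<Longrightarrow> lap_slope p \<noteq> 0"
  using lap_slope_cases lam_pos by force

lemma lap_affine:
  "p \<in> {1..lap_count} \<Longrightarrow> t \<in> {y (p - 1)..y p} \<Longrightarrow> h t = lap_slope p * t + lap_const p"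
  unfolding lap_slope_def lap_const_def using affine lap_decomp lap_endpoints by metis

lemma lap_ends_pos:
  "p \<in> {1..lap_count} \<Longrightarrow> lap_slope p = lam \<Longrightarrow>
   lam * y (p - 1) + lap_const p = x (lap_target p - 1) \<and> lam * y p + lap_const p = x (lap_target p)"
  unfolding lap_slope_def lap_const_def lap_target_def using piece_ends(1) lap_decomp lap_endpoints by metis

lemma lap_ends_neg:
  "p \<in> {1..lap_count} \<Longrightarrow> lap_slope p = - lam \<Longrightarrow>
   - lam * y p + lap_const p = x (lap_target p - 1) \<and> - lam * y (p - 1) + lap_const p = x (lap_target p)"
  unfolding lap_slope_def lap_const_def lap_target_def using piece_ends(2) lap_decomp lap_endpoints by metis

lemma h_lap_left_end:
  assumes p: "p \<in> {1..lap_count}"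
  shows "h (y (p - 1)) = x (if lap_slope p = lam then lap_target p - 1 else lap_target p)"
proof -
  have "h (y (p - 1)) = lap_slope p * y (p - 1) + lap_const p"
    using lap_affine[OF p] y_less_step[OF p] by simp
  then show ?thesis
    using lap_ends_pos[OF p] lap_ends_neg[OF p] lap_slope_cases[OF p] lam_pos by auto
qed

lemma h_lap_right_end:
  assumes p: "p \<in> {1..lap_count}"
  shows "h (y p) = x (if lap_slope p = lam then lap_target p else lap_target p - 1)"
proof -
  have "h (y p) = lap_slope p * y p + lap_const p"
    using lap_affine[OF p] y_less_step[OF p] by simp
  then show ?thesis
    using lap_ends_pos[OF p] lap_ends_neg[OF p] lap_slope_cases[OF p] lam_pos by auto
qed

lemma lap_target_offset_add:
  "j \<in> {1..n} \<Longrightarrow> k \<in> {1..R j} \<Longrightarrow> lap_target (offset (j - 1) + k) = T j k"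
  using block_offset_add unfolding lap_target_def lap_index_def by simp

lemma lap_offsets: "{Suc (offset (j - 1))..offset j} = (\<lambda>k. offset (j - 1) + k) ` {1..R j}"
  if "j \<ge> 1"
  using offset_step[OF that] by (auto simp: image_iff intro!: bexI[of _ "_ - offset (j - 1)"])

section \<open>The lap matrix\<close>

definition lap_matrix :: "nat \<Rightarrow> nat \<Rightarrow> nat" where
  "lap_matrix q p = (if offset (lap_target p - 1) < q \<and> q \<le> offset (lap_target p) then 1 else 0)"

definition lap_length :: "nat \<Rightarrow> real" where "lap_length p = y p - y (p - 1)"

lemma lap_matrix_01: "lap_matrix q p \<in> {0, 1}"
  unfolding lap_matrix_def by simp

lemma lap_matrix_eq_block:
  assumes "q \<in> {1..lap_count}" "p \<in> {1..lap_count}"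
  shows "lap_matrix q p = (if block q = lap_target p then 1 else 0)"
  using block_eqI[OF lap_target_range[OF assms(2)]] block_bounds[OF assms(1)]
  unfolding lap_matrix_def by auto

lemma partition_pt_lap_length: "partition_pt lap_length = y"
proof
  fix p
  show "partition_pt lap_length p = y p"
    using sum_diff_telescope[of 0 p y] y_0 unfolding partition_pt_def lap_length_def by simp
qed

lemma sum_lap_block:
  assumes "i \<in> {1..n}"
  shows "(\<Sum>q=1..lap_count. if offset (i - 1) < q \<and> q \<le> offset i then f q else 0)
       = (\<Sum>q\<in>{Suc (offset (i - 1))..offset i}. f q)"
proof -
  have "{q\<in>{1..lap_count}. offset (i - 1) < q \<and> q \<le> offset i} = {Suc (offset (i - 1))..offset i}"
    using offset_le_lap_count[of i] assms by auto
  then show ?thesis by (simp add: sum.inter_filter[symmetric])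
qed

lemma perron_lap_matrix: "perron_left_vector lap_count lap_matrix lam lap_length"
  unfolding perron_left_vector_def
proof (intro conjI ballI)
  show "lap_length p > 0" if "p \<in> {1..lap_count}" for p
    using y_less_step[OF that] unfolding lap_length_def by simp
  show "(\<Sum>p=1..lap_count. lap_length p) = 1"
    using partition_pt_lap_length y_lap_count unfolding partition_pt_def by metis
  fix p assume p: "p \<in> {1..lap_count}"
  let ?i = "lap_target p"
  have i: "?i \<in> {1..n}" using lap_target_range[OF p] .
  have "(\<Sum>q=1..lap_count. real (lap_matrix q p) * lap_length q)
      = (\<Sum>q=1..lap_count. if offset (?i - 1) < q \<and> q \<le> offset ?i then lap_length q else 0)"
    unfolding lap_matrix_def by (intro sum.cong) auto
  also have "\<dots> = (\<Sum>q\<in>{Suc (offset (?i - 1))..offset ?i}. lap_length q)"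
    by (rule sum_lap_block[OF i])
  also have "\<dots> = y (offset ?i) - y (offset (?i - 1))"
    unfolding lap_length_def by (rule sum_diff_telescope) (rule offset_mono, simp)
  also have "\<dots> = x ?i - x (?i - 1)"
    using y_offset[of ?i] y_offset[of "?i - 1"] i by auto
  also have "\<dots> = v ?i"
    using x_diff[of ?i] i by auto
  also have "\<dots> = lam * lap_length p"
    using piece_length lap_decomp[OF p] lap_endpoints[OF p] unfolding lap_length_def lap_target_def
    by metis
  finally show "(\<Sum>q=1..lap_count. real (lap_matrix q p) * lap_length q) = lam * lap_length p" .
qed

lemma leading_eigenvalue_lap_matrix: "leading_eigenvalue lap_count lap_matrix = lam"
proof -
  have "spectral_radius (to_mat lap_count (\<lambda>q p. complex_of_real (real (lap_matrix q p)))) = lam"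
    using perron_lap_matrix lap_count_pos
    by (intro spectral_radius_eq_left_eigenvalue) (auto simp: perron_left_vector_def)
  then show ?thesis
    unfolding leading_eigenvalue_def by simp
qed

lemma card_target:
  assumes i: "i \<in> {1..n}" and u: "u \<in> {1..n}"
  shows "card {k\<in>{1..R i}. T i k = u} = M u i"
proof -
  have "{k\<in>{1..R i}. T i k = u} = {k\<in>{1..R i}. h ` {a i (k - 1)..a i k} = {x (u - 1)..x u}}"
    using target_image[OF i] interval_inj[OF target[OF i] u] by auto
  then show ?thesis using card_laps[OF u i] by simp
qed

lemma sum_block_lap_target:
  fixes f :: "nat \<Rightarrow> 'a::comm_semiring_1"
  assumes i: "i \<in> {1..n}"
  shows "(\<Sum>l\<in>{Suc (offset (i - 1))..offset i}. f (lap_target l)) = (\<Sum>u=1..n. f u * of_nat (M u i))"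
proof -
  have "(\<Sum>l\<in>{Suc (offset (i - 1))..offset i}. f (lap_target l))
      = (\<Sum>k=1..R i. f (lap_target (offset (i - 1) + k)))"
    unfolding lap_offsets[of i] using i offset_step[of i]
    by (intro sum.reindex_cong[of "\<lambda>k. offset (i - 1) + k"]) (auto simp: inj_on_def)
  also have "\<dots> = (\<Sum>k=1..R i. f (T i k))"
    using lap_target_offset_add[OF i] by simp
  also have "\<dots> = (\<Sum>u=1..n. f u * of_nat (card {k\<in>{1..R i}. T i k = u}))"
    using target[OF i] by (intro sum_comp_eq_sum_card_fibres) auto
  also have "\<dots> = (\<Sum>u=1..n. f u * of_nat (M u i))"
    using card_target[OF i] by simp
  finally show ?thesis .
qed

lemma pow_entry_lap_matrix:
  "q \<in> {1..lap_count} \<Longrightarrow> p \<in> {1..lap_count} \<Longrightarrow>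
   pow_entry lap_count lap_matrix (Suc t) q p = pow_entry n M t (block q) (lap_target p)"
proof (induction t arbitrary: p)
  case 0
  have "pow_entry lap_count lap_matrix (Suc 0) q p = (\<Sum>l=1..lap_count. if l = q then lap_matrix l p else 0)"
    unfolding pow_entry.simps by (intro sum.cong) auto
  then show ?case using 0 by (simp add: lap_matrix_eq_block)
next
  case (Suc t)
  let ?i = "lap_target p"
  have i: "?i \<in> {1..n}" using lap_target_range[OF Suc.prems(2)] .
  have "pow_entry lap_count lap_matrix (Suc (Suc t)) q p
      = (\<Sum>l=1..lap_count. if offset (?i - 1) < l \<and> l \<le> offset ?i
                           then pow_entry n M t (block q) (lap_target l) else 0)"
    by (subst pow_entry.simps(2), intro sum.cong refl)
      (simp add: Suc.IH[OF Suc.prems(1)] lap_matrix_def del: pow_entry.simps)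
  also have "\<dots> = (\<Sum>l\<in>{Suc (offset (?i - 1))..offset ?i}. pow_entry n M t (block q) (lap_target l))"
    by (rule sum_lap_block[OF i])
  also have "\<dots> = (\<Sum>u=1..n. pow_entry n M t (block q) u * of_nat (M u ?i))"
    by (rule sum_block_lap_target[OF i])
  also have "\<dots> = pow_entry n M (Suc t) (block q) ?i"
    by simp
  finally show ?case .
qed

lemma aperiodic_lap_matrix:
  assumes "aperiodic n M"
  shows "aperiodic lap_count lap_matrix"
proof -
  obtain t where "t \<ge> 1" and pos: "\<forall>i\<in>{1..n}. \<forall>j\<in>{1..n}. pow_entry n M t i j > 0"
    using assms unfolding aperiodic_iff_pow_entry by auto
  then have "\<forall>q\<in>{1..lap_count}. \<forall>p\<in>{1..lap_count}. pow_entry lap_count lap_matrix (Suc t) q p > 0"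
    using pow_entry_lap_matrix block_bounds(1) lap_target_range by simp
  then show ?thesis
    unfolding aperiodic_iff_pow_entry by (intro exI[of _ "Suc t"]) simp
qed

text \<open>\<open>h (y p) = x (end_block p)\<close>, so column \<open>p\<close> of the lap matrix is the block of ones strictly
  above \<open>min\<close> and up to \<open>max\<close> of \<open>offset (end_block (p - 1))\<close> and \<open>offset (end_block p)\<close>.\<close>
definition end_block :: "nat \<Rightarrow> nat" where
  "end_block p =
    (if p = 0 then (if lap_slope 1 = lam then lap_target 1 - 1 else lap_target 1)
     else (if lap_slope p = lam then lap_target p else lap_target p - 1))"

lemma end_block_le: "p \<le> lap_count \<Longrightarrow> end_block p \<le> n"
  using lap_target_range[of p] lap_target_range[of 1] lap_count_pos unfolding end_block_def by auto

lemma end_block_pred: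
  assumes p: "p \<in> {1..lap_count}"
  shows "end_block (p - 1) = (if lap_slope p = lam then lap_target p - 1 else lap_target p)"
proof (cases "p = 1")
  case False
  then have p': "p - 1 \<in> {1..lap_count}" using p by auto
  have "x (end_block (p - 1)) = h (y (p - 1))"
    using h_lap_right_end[OF p'] p' unfolding end_block_def by auto
  also have "\<dots> = x (if lap_slope p = lam then lap_target p - 1 else lap_target p)"
    by (rule h_lap_left_end[OF p])
  finally show ?thesis
    using x_inj end_block_le[of "p - 1"] lap_target_range[OF p] p by (auto split: if_splits)
qed (simp add: end_block_def)

lemma odd_block_lap_matrix: "odd_block lap_count lap_matrix"
  unfolding odd_block_def
proof (intro conjI)
  show "\<forall>j\<in>{1..lap_count}. \<forall>i1\<in>{1..lap_count}. \<forall>i2\<in>{1..lap_count}. \<forall>i3\<in>{1..lap_count}.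
     i1 \<le> i2 \<and> i2 \<le> i3 \<and> lap_matrix i1 j \<noteq> 0 \<and> lap_matrix i3 j \<noteq> 0 \<longrightarrow> lap_matrix i2 j \<noteq> 0"
    unfolding lap_matrix_def by auto
  show "\<exists>\<phi>. (\<forall>k\<in>{0..lap_count}. \<phi> k \<in> {0..lap_count}) \<and>
    (\<forall>i\<in>{1..lap_count}. \<forall>p\<in>{1..lap_count}.
       odd (lap_matrix i p) \<longleftrightarrow> min (\<phi> (p - 1)) (\<phi> p) < i \<and> i \<le> max (\<phi> (p - 1)) (\<phi> p))"
  proof (intro exI[of _ "\<lambda>p. offset (end_block p)"] conjI ballI)
    show "offset (end_block k) \<in> {0..lap_count}" if "k \<in> {0..lap_count}" for k
      using that end_block_le offset_le_lap_count by auto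
    fix i p assume p: "p \<in> {1..lap_count}"
    have "offset (lap_target p - 1) \<le> offset (lap_target p)" by (rule offset_mono) simp
    then have "min (offset (end_block (p - 1))) (offset (end_block p)) = offset (lap_target p - 1)"
      "max (offset (end_block (p - 1))) (offset (end_block p)) = offset (lap_target p)"
      using end_block_pred[OF p] p unfolding end_block_def by auto
    then show "odd (lap_matrix i p) \<longleftrightarrow>
      min (offset (end_block (p - 1))) (offset (end_block p)) < i \<and>
      i \<le> max (offset (end_block (p - 1))) (offset (end_block p))"
      unfolding lap_matrix_def by auto
  qed
qed

text \<open>Lap \<open>p\<close> is cut at the preimages \<open>sub_pt p k\<close> of the points \<open>y (image_index p k)\<close> inside
  \<open>I\<^bsub>lap_target p\<^esub>\<close>; its \<open>k\<close>-th piece is mapped onto lap \<open>sub_target p k\<close>.\<close>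

definition image_index :: "nat \<Rightarrow> nat \<Rightarrow> nat" where
  "image_index p k =
    (if lap_slope p = lam then offset (lap_target p - 1) + k else offset (lap_target p) - k)"

definition sub_target :: "nat \<Rightarrow> nat \<Rightarrow> nat" where
  "sub_target p k =
    (if lap_slope p = lam then offset (lap_target p - 1) + k else offset (lap_target p) - k + 1)"

definition sub_pt :: "nat \<Rightarrow> nat \<Rightarrow> real" where
  "sub_pt p k = (y (image_index p k) - lap_const p) / lap_slope p"

lemma offset_lap_target:
  "p \<in> {1..lap_count} \<Longrightarrow> offset (lap_target p) = offset (lap_target p - 1) + R (lap_target p)"
  using offset_step lap_target_range by force

lemma y_offset_lap_target:
  assumes "p \<in> {1..lap_count}"
  shows "y (offset (lap_target p)) = x (lap_target p)"
    and "y (offset (lap_target p - 1)) = x (lap_target p - 1)"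
  using y_offset[of "lap_target p"] y_offset[of "lap_target p - 1"] lap_target_range[OF assms] by auto

lemma h_sub_pt: "p \<in> {1..lap_count} \<Longrightarrow> lap_slope p * sub_pt p k + lap_const p = y (image_index p k)"
  unfolding sub_pt_def using lap_slope_nonzero by simp

lemma sub_pt_eqI:
  assumes "p \<in> {1..lap_count}" and "y (image_index p k) = lap_slope p * t + lap_const p"
  shows "sub_pt p k = t"
  using assms lap_slope_nonzero[OF assms(1)] unfolding sub_pt_def by simp

lemma sub_pt_first:
  assumes p: "p \<in> {1..lap_count}"
  shows "sub_pt p 0 = y (p - 1)"
proof (rule sub_pt_eqI[OF p])
  show "y (image_index p 0) = lap_slope p * y (p - 1) + lap_const p"
  proof (cases "lap_slope p = lam")
    case True
    then show ?thesis
      using lap_ends_pos[OF p True] y_offset_lap_target[OF p] by (simp add: image_index_def)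
  next
    case False
    then have "lap_slope p = - lam" using lap_slope_cases[OF p] by simp
    then show ?thesis
      using lap_ends_neg[OF p] y_offset_lap_target[OF p] False by (simp add: image_index_def)
  qed
qed

lemma sub_pt_last:
  assumes p: "p \<in> {1..lap_count}"
  shows "sub_pt p (R (lap_target p)) = y p"
proof (rule sub_pt_eqI[OF p])
  show "y (image_index p (R (lap_target p))) = lap_slope p * y p + lap_const p"
  proof (cases "lap_slope p = lam")
    case True
    then show ?thesis
      using lap_ends_pos[OF p True] y_offset_lap_target[OF p] offset_lap_target[OF p]
      by (simp add: image_index_def)
  next
    case False
    then have "lap_slope p = - lam" using lap_slope_cases[OF p] by simp
    then show ?thesis
      using lap_ends_neg[OF p] y_offset_lap_target[OF p] offset_lap_target[OF p] False
      by (simp add: image_index_def)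
  qed
qed

lemma sub_pt_less:
  assumes p: "p \<in> {1..lap_count}" and k: "k < R (lap_target p)"
  shows "sub_pt p k < sub_pt p (Suc k)"
proof (cases "lap_slope p = lam")
  case True
  have "offset (lap_target p - 1) + Suc k \<le> lap_count"
    using offset_lap_target[OF p] k offset_le_lap_count[of "lap_target p"] lap_target_range[OF p] by simp
  then have "y (offset (lap_target p - 1) + k) < y (offset (lap_target p - 1) + Suc k)"
    by (intro y_less) auto
  then show ?thesis
    unfolding sub_pt_def image_index_def using True lam_pos by (simp add: divide_strict_right_mono)
next
  case False
  then have neg: "lap_slope p = - lam" using lap_slope_cases[OF p] by auto
  have "offset (lap_target p) - k \<le> lap_count"
    using offset_le_lap_count[of "lap_target p"] lap_target_range[OF p] by simp
  then have "y (offset (lap_target p) - Suc k) < y (offset (lap_target p) - k)"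
    using offset_lap_target[OF p] k by (intro y_less) auto
  then show ?thesis
    unfolding sub_pt_def image_index_def using False neg lam_pos
    by (simp add: divide_strict_right_mono)
qed

lemma sub_pt_mono:
  "p \<in> {1..lap_count} \<Longrightarrow> k \<le> k' \<Longrightarrow> k' \<le> R (lap_target p) \<Longrightarrow> sub_pt p k \<le> sub_pt p k'"
proof (induction k')
  case (Suc k')
  then show ?case
    using sub_pt_less[of p k'] by (cases "k = Suc k'") (auto simp: le_Suc_eq)
qed simp

lemma sub_target_bounds:
  assumes "p \<in> {1..lap_count}" "k \<in> {1..R (lap_target p)}"
  shows "offset (lap_target p - 1) < sub_target p k" "sub_target p k \<le> offset (lap_target p)"
  using offset_lap_target[OF assms(1)] assms(2) unfolding sub_target_def by auto

lemma sub_target_range: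
  assumes "p \<in> {1..lap_count}" "k \<in> {1..R (lap_target p)}"
  shows "sub_target p k \<in> {1..lap_count}"
  using sub_target_bounds[OF assms] offset_le_lap_count[of "lap_target p"] lap_target_range[OF assms(1)]
  by auto

lemma sub_affine:
  assumes p: "p \<in> {1..lap_count}" and k: "k \<in> {1..R (lap_target p)}"
    and t: "t \<in> {sub_pt p (k - 1)..sub_pt p k}"
  shows "h t = lap_slope p * t + lap_const p"
proof -
  have "sub_pt p 0 \<le> sub_pt p (k - 1)" "sub_pt p k \<le> sub_pt p (R (lap_target p))"
    using sub_pt_mono[OF p] k by auto
  then have "t \<in> {y (p - 1)..y p}" using t sub_pt_first[OF p] sub_pt_last[OF p] by auto
  then show ?thesis by (rule lap_affine[OF p])
qed

lemma sub_image:
  assumes p: "p \<in> {1..lap_count}" and k: "k \<in> {1..R (lap_target p)}"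
  shows "h ` {sub_pt p (k - 1)..sub_pt p k} = {y (sub_target p k - 1)..y (sub_target p k)}"
proof -
  have lt: "sub_pt p (k - 1) < sub_pt p k"
    using sub_pt_less[OF p, of "k - 1"] k by auto
  have "h ` {sub_pt p (k - 1)..sub_pt p k} = (\<lambda>t. lap_slope p * t + lap_const p) ` {sub_pt p (k - 1)..sub_pt p k}"
    using sub_affine[OF p k] by (rule image_cong[OF refl])
  also have "\<dots> = {y (sub_target p k - 1)..y (sub_target p k)}"
  proof (cases "lap_slope p = lam")
    case True
    then have "(\<lambda>t. lap_slope p * t + lap_const p) ` {sub_pt p (k - 1)..sub_pt p k}
        = {y (image_index p (k - 1))..y (image_index p k)}"
      using image_affinity_atLeastAtMost[of "lap_slope p"] lt lam_pos h_sub_pt[OF p] by simp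
    then show ?thesis using True k unfolding image_index_def sub_target_def by auto
  next
    case False
    then have "(\<lambda>t. lap_slope p * t + lap_const p) ` {sub_pt p (k - 1)..sub_pt p k}
        = {y (image_index p k)..y (image_index p (k - 1))}"
      using image_affinity_atLeastAtMost[of "lap_slope p"] lt lap_slope_cases[OF p] lam_pos
        h_sub_pt[OF p] by auto
    moreover have "image_index p (k - 1) = sub_target p k" "image_index p k = sub_target p k - 1"
      using False k offset_lap_target[OF p] unfolding image_index_def sub_target_def by auto
    ultimately show ?thesis by simp
  qed
  finally show ?thesis .
qed

lemma card_sub_pieces:
  assumes p: "p \<in> {1..lap_count}" and q: "q \<in> {1..lap_count}"
  shows "card {k\<in>{1..R (lap_target p)}. h ` {sub_pt p (k - 1)..sub_pt p k} = {y (q - 1)..y q}}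
       = lap_matrix q p"
proof -
  have "{k\<in>{1..R (lap_target p)}. h ` {sub_pt p (k - 1)..sub_pt p k} = {y (q - 1)..y q}}
      = {k\<in>{1..R (lap_target p)}. sub_target p k = q}"
    using sub_image[OF p] lap_inj[OF sub_target_range[OF p] q] by auto
  also have "\<dots> = (if offset (lap_target p - 1) < q \<and> q \<le> offset (lap_target p) then
       {if lap_slope p = lam then q - offset (lap_target p - 1) else offset (lap_target p) + 1 - q}
       else {})"
    using sub_target_bounds[OF p] offset_lap_target[OF p] unfolding sub_target_def
    by (auto split: if_splits)
  finally show ?thesis unfolding lap_matrix_def by simp
qed

lemma pl_realizes_lap_matrix:
  assumes "continuous_on {0..1} h" and "h ` {0..1} \<subseteq> {0..1}"
  shows "pl_realizes h lap_count lap_matrix"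
  unfolding pl_realizes_def Let_def leading_eigenvalue_lap_matrix
proof (intro exI[of _ lap_length] conjI ballI assms perron_lap_matrix,
    unfold partition_pt_lap_length)
  fix p assume p: "p \<in> {1..lap_count}"
  show "\<exists>r a. a 0 = y (p - 1) \<and> a r = y p \<and> (\<forall>k<r. a k < a (Suc k)) \<and>
          (\<forall>k\<in>{1..r}. (\<exists>s c. (s = lam \<or> s = - lam) \<and> (\<forall>t\<in>{a (k - 1)..a k}. h t = s * t + c)) \<and>
                 (\<exists>i\<in>{1..lap_count}. h ` {a (k - 1)..a k} = {y (i - 1)..y i})) \<and>
          (\<forall>i\<in>{1..lap_count}. card {k \<in> {1..r}. h ` {a (k - 1)..a k} = {y (i - 1)..y i}}
                               = lap_matrix i p)"
  proof (intro exI[of _ "R (lap_target p)"] exI[of _ "sub_pt p"] conjI ballI allI impI)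
    show "sub_pt p 0 = y (p - 1)" by (rule sub_pt_first[OF p])
    show "sub_pt p (R (lap_target p)) = y p" by (rule sub_pt_last[OF p])
    show "\<And>k. k < R (lap_target p) \<Longrightarrow> sub_pt p k < sub_pt p (Suc k)" by (rule sub_pt_less[OF p])
    fix k assume k: "k \<in> {1..R (lap_target p)}"
    show "\<exists>s c. (s = lam \<or> s = - lam) \<and> (\<forall>t\<in>{sub_pt p (k - 1)..sub_pt p k}. h t = s * t + c)"
      using lap_slope_cases[OF p] sub_affine[OF p k] by blast
    show "\<exists>i\<in>{1..lap_count}. h ` {sub_pt p (k - 1)..sub_pt p k} = {y (i - 1)..y i}"
      using sub_target_range[OF p k] sub_image[OF p k] by blast
  next
    fix i assume "i \<in> {1..lap_count}"
    then show "card {k\<in>{1..R (lap_target p)}. h ` {sub_pt p (k - 1)..sub_pt p k} = {y (i - 1)..y i}}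
      = lap_matrix i p"
      by (rule card_sub_pieces[OF p])
  qed
qed

end

lemma pl_realizes_imp_pl_realization:
  assumes "pl_realizes h n M"
  obtains v R a where "pl_realization n M h (leading_eigenvalue n M) v R a"
    and "continuous_on {0..1} h" and "h ` {0..1} \<subseteq> {0..1}"
proof -
  let ?lam = "leading_eigenvalue n M"
  define realizes_column where "realizes_column v j r a \<longleftrightarrow>
    a 0 = partition_pt v (j - 1) \<and> a r = partition_pt v j \<and> (\<forall>k<r. a k < a (Suc k)) \<and>
    (\<forall>k\<in>{1..r}.
       (\<exists>s c. (s = ?lam \<or> s = - ?lam) \<and> (\<forall>t\<in>{a (k - 1)..a k}. h t = s * t + c)) \<and>
       (\<exists>i\<in>{1..n}. h ` {a (k - 1)..a k} = {partition_pt v (i - 1)..partition_pt v i})) \<and>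
    (\<forall>i\<in>{1..n}. card {k\<in>{1..r}. h ` {a (k - 1)..a k} = {partition_pt v (i - 1)..partition_pt v i}}
       = M i j)" for v j and r :: nat and a :: "nat \<Rightarrow> real"
  have "\<exists>v. perron_left_vector n M ?lam v \<and> continuous_on {0..1} h \<and> h ` {0..1} \<subseteq> {0..1} \<and>
      (\<forall>j\<in>{1..n}. \<exists>r a. realizes_column v j r a)"
    using assms unfolding pl_realizes_def Let_def realizes_column_def .
  then obtain v where perron: "perron_left_vector n M ?lam v"
    and cont: "continuous_on {0..1} h" and range: "h ` {0..1} \<subseteq> {0..1}"
    and cols: "\<forall>j\<in>{1..n}. \<exists>r a. realizes_column v j r a"
    by (elim exE conjE) (rule that; assumption)
  from cols obtain R where "\<forall>j\<in>{1..n}. \<exists>a. realizes_column v j (R j) a"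
    by (rule bchoice[elim_format], elim exE) (erule that)
  then obtain a where columns: "\<forall>j\<in>{1..n}. realizes_column v j (R j) (a j)"
    by (rule bchoice[elim_format], elim exE) (erule that)
  have "pl_realization n M h ?lam v R a"
    by unfold_locales (use perron columns in \<open>auto simp: realizes_column_def\<close>)
  then show ?thesis using cont range by (rule that)
qed

theorem theorem2:
  fixes n :: nat and M :: "nat \<Rightarrow> nat \<Rightarrow> nat" and h :: "real \<Rightarrow> real"
  assumes "nonsingular n M" and "aperiodic n M" and "odd_block n M"
    and "pl_realizes h n M"
  shows "\<exists>(m::nat) (N :: nat \<Rightarrow> nat \<Rightarrow> nat).
           aperiodic m N \<and> odd_block m N \<and> (\<forall>i\<in>{1..m}. \<forall>j\<in>{1..m}. N i j \<in> {0,1}) \<and>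
           pl_realizes h m N \<and> leading_eigenvalue m N = leading_eigenvalue n M"
proof -
  obtain v R a where "pl_realization n M h (leading_eigenvalue n M) v R a"
    and cont: "continuous_on {0..1} h" and range: "h ` {0..1} \<subseteq> {0..1}"
    using pl_realizes_imp_pl_realization[OF assms(4)] .
  then interpret pl_realization n M h "leading_eigenvalue n M" v R a
    by blast
  show ?thesis
    using aperiodic_lap_matrix[OF assms(2)] odd_block_lap_matrix lap_matrix_01
      pl_realizes_lap_matrix[OF cont range] leading_eigenvalue_lap_matrix
    by blast
qed

end
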